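(* For every integer $n\ge 6$, $q(K_{1,1,n-2}^+)>n+2-\frac{4}{n+2}$.
   Context: $q(G)$ denotes the largest eigenvalue of the signless Laplacian matrix $Q(G)=D(G)+A(G)$ of a graph $G$, where $A(G)$ is the adjacency matrix and $D(G)$ the diagonal degree matrix. $K_{1,1,n-2}$ is the complete tripartite graph with parts of sizes $1,1,n-2$, and $K_{1,1,n-2}^+$ is obtained from it by adding one edge inside the part of size $n-2$. *)

theory Defs
  imports "Jordan_Normal_Form.Char_Poly"
begin

text \<open>A simple graph on vertex set {0..<n} given by a symmetric irreflexive
  edge predicate E.\<close>

definition adjacency_matrix :: "nat \<Rightarrow> (nat \<Rightarrow> nat \<Rightarrow> bool) \<Rightarrow> real mat" where
  "adjacency_matrix n E = mat n n (\<lambda>(i, j). if E i j then 1 else 0)"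

definition degree :: "nat \<Rightarrow> (nat \<Rightarrow> nat \<Rightarrow> bool) \<Rightarrow> nat \<Rightarrow> nat" where
  "degree n E i = card {k. k < n \<and> E i k}"

definition degree_matrix :: "nat \<Rightarrow> (nat \<Rightarrow> nat \<Rightarrow> bool) \<Rightarrow> real mat" where
  "degree_matrix n E = mat n n (\<lambda>(i, j). if i = j then real (degree n E i) else 0)"

definition signless_laplacian :: "nat \<Rightarrow> (nat \<Rightarrow> nat \<Rightarrow> bool) \<Rightarrow> real mat" where
  "signless_laplacian n E = degree_matrix n E + adjacency_matrix n E"

definition q_index :: "nat \<Rightarrow> (nat \<Rightarrow> nat \<Rightarrow> bool) \<Rightarrow> real" where
  "q_index n E = Max {\<mu>. eigenvalue (signless_laplacian n E) \<mu>}"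

text \<open>K_{1,1,n-2}^+ on vertices {0..<n}: parts {0}, {1}, {2..n-1};
  the extra edge inside the large part is {2,3}.\<close>
definition K11_plus :: "nat \<Rightarrow> nat \<Rightarrow> bool" where
  "K11_plus i j = (i \<noteq> j \<and> (i < 2 \<or> j < 2 \<or> {i, j} = {2, 3}))"

end

theory Submission
  imports Defs
begin

text \<open>The vector that is 1 on the two hubs 0 and 1, y on the endpoints 2 and 3 of the extra
  edge and z on the remaining vertices is an eigenvector of Q as soon as
  (\<mu> - 4) y = 2, (\<mu> - 2) z = 2 and \<mu> = n + 2 y + (n - 4) z. Eliminating y and z leaves a
  cubic in \<mu>, which is negative at n + 2 - 4/(n + 2) and positive at n + 10; its root in
  between is therefore an eigenvalue of Q exceeding the bound.\<close>

lemma finite_eigenvalues: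
  fixes A :: "'a :: field mat"
  assumes "A \<in> carrier_mat n n"
  shows "finite {\<mu>. eigenvalue A \<mu>}"
proof -
  have "char_poly A \<noteq> 0"
    using degree_monic_char_poly[OF assms] by auto
  then have "finite {\<mu>. poly (char_poly A) \<mu> = 0}"
    by (rule poly_roots_finite)
  then show ?thesis
    using eigenvalue_root_char_poly[OF assms] by simp
qed

lemma eigenvalue_le_Max_eigenvalues:
  fixes A :: "'a :: {field, linorder} mat"
  assumes "A \<in> carrier_mat n n" and "eigenvalue A \<mu>"
  shows "\<mu> \<le> Max {\<mu>. eigenvalue A \<mu>}"
  using finite_eigenvalues[OF assms(1)] assms(2) by (simp add: Max_ge)

lemma signless_laplacian_carrier_mat: "signless_laplacian n E \<in> carrier_mat n n"
  by (simp add: signless_laplacian_def degree_matrix_def adjacency_matrix_def)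

lemma signless_laplacian_mult_vec_index:
  assumes "i < n" and "v \<in> carrier_vec n"
  shows "(signless_laplacian n E *\<^sub>v v) $ i =
    real (degree n E i) * v $ i + (\<Sum>j \<in> {j. j < n \<and> E i j}. v $ j)"
proof -
  have "(signless_laplacian n E *\<^sub>v v) $ i =
      (\<Sum>j<n. (if i = j then real (degree n E i) * v $ j else 0) + (if E i j then v $ j else 0))"
    using assms by (auto simp: signless_laplacian_def degree_matrix_def adjacency_matrix_def
        scalar_prod_def atLeast0LessThan distrib_right intro!: sum.cong)
  also have "\<dots> = real (degree n E i) * v $ i + (\<Sum>j \<in> {j. j < n \<and> E i j}. v $ j)"
    using assms(1) by (simp add: sum.distrib sum.If_cases lessThan_def Collect_conj_eq)
  finally show ?thesis .
qed

lemma K11_plus_neighbours: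
  assumes "4 \<le> n" and "i < n"
  shows "{j. j < n \<and> K11_plus i j} =
    (if i < 2 then {..<n} - {i} else if i < 4 then {0, 1, 5 - i} else {0, 1})"
  using assms by (auto simp: K11_plus_def doubleton_eq_iff) arith

definition block_vec :: "nat \<Rightarrow> real \<Rightarrow> real \<Rightarrow> real \<Rightarrow> real vec" where
  "block_vec n a b c = vec n (\<lambda>j. if j < 2 then a else if j < 4 then b else c)"

lemma block_vec_carrier: "block_vec n a b c \<in> carrier_vec n"
  by (simp add: block_vec_def)

lemma sum_block_vec:
  assumes "4 \<le> n"
  shows "(\<Sum>j<n. block_vec n a b c $ j) = 2 * a + 2 * b + (real n - 4) * c"
proof -
  have "{..<n} = {0..<4} \<union> {4..<n}"
    using assms by auto
  then have "(\<Sum>j<n. block_vec n a b c $ j) =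
      (\<Sum>j\<in>{0..<4}. block_vec n a b c $ j) + (\<Sum>j\<in>{4..<n}. block_vec n a b c $ j)"
    by (simp add: sum.union_disjoint)
  also have "\<dots> = 2 * a + 2 * b + (real n - 4) * c"
    using assms by (simp add: block_vec_def numeral_eq_Suc of_nat_diff)
  finally show ?thesis .
qed

lemma K11_plus_mult_block_vec:
  assumes "4 \<le> n" and "i < n"
  shows "(signless_laplacian n K11_plus *\<^sub>v block_vec n a b c) $ i =
    (if i < 2 then real n * a + 2 * b + (real n - 4) * c
     else if i < 4 then 2 * a + 4 * b else 2 * a + 2 * c)"
proof -
  have degree: "real (degree n K11_plus i) = (if i < 2 then real n - 1 else if i < 4 then 3 else 2)"
    using assms by (simp add: degree_def K11_plus_neighbours of_nat_diff)
  show ?thesis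
  proof (cases "i < 2")
    case True
    then have "(\<Sum>j \<in> {..<n} - {i}. block_vec n a b c $ j) = 2 * a + 2 * b + (real n - 4) * c - a"
      using assms by (simp add: sum_diff1 sum_block_vec) (simp add: block_vec_def)
    then show ?thesis
      using assms True by (simp add: signless_laplacian_mult_vec_index block_vec_def
          K11_plus_neighbours degree algebra_simps)
  next
    case False
    then show ?thesis
      using assms by (auto simp: signless_laplacian_mult_vec_index block_vec_def
          K11_plus_neighbours degree)
  qed
qed

text \<open>Multiplying the hub equation \<mu> = n + 2 y + (n - 4) z by (\<mu> - 4) (\<mu> - 2) and substituting
  y = 2 / (\<mu> - 4), z = 2 / (\<mu> - 2) gives this cubic.\<close>
definition K11_plus_cubic :: "nat \<Rightarrow> real \<Rightarrow> real" where
  "K11_plus_cubic n \<mu> = (\<mu> - n) * (\<mu> - 4) * (\<mu> - 2) - 4 * (\<mu> - 2) - 2 * (real n - 4) * (\<mu> - 4)"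

lemma eigenvalue_K11_plus_if_cubic_root:
  assumes "4 \<le> n" and "K11_plus_cubic n \<mu> = 0" and "4 < \<mu>"
  shows "eigenvalue (signless_laplacian n K11_plus) \<mu>"
proof -
  define y where "y = 2 / (\<mu> - 4)"
  define z where "z = 2 / (\<mu> - 2)"
  have y: "(\<mu> - 4) * y = 2" and z: "(\<mu> - 2) * z = 2"
    using assms(3) by (simp_all add: y_def z_def field_simps)
  have "(\<mu> - 4) * (\<mu> - 2) * (\<mu> - (real n + 2 * y + (real n - 4) * z)) =
      (\<mu> - 4) * (\<mu> - 2) * (\<mu> - n) - 2 * (\<mu> - 2) * ((\<mu> - 4) * y)
      - (real n - 4) * (\<mu> - 4) * ((\<mu> - 2) * z)"
    by (simp add: algebra_simps)
  also have "\<dots> = K11_plus_cubic n \<mu>"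
    unfolding y z by (simp add: K11_plus_cubic_def algebra_simps)
  finally have hub: "real n + 2 * y + (real n - 4) * z = \<mu>"
    using assms(2,3) by simp
  have "signless_laplacian n K11_plus *\<^sub>v block_vec n 1 y z = \<mu> \<cdot>\<^sub>v block_vec n 1 y z"
  proof (rule eq_vecI)
    fix i
    assume "i < dim_vec (\<mu> \<cdot>\<^sub>v block_vec n 1 y z)"
    then have "i < n"
      by (simp add: block_vec_def)
    moreover have "2 + 4 * y = \<mu> * y" and "2 + 2 * z = \<mu> * z"
      using y z by (simp_all add: algebra_simps)
    ultimately show "(signless_laplacian n K11_plus *\<^sub>v block_vec n 1 y z) $ i = (\<mu> \<cdot>\<^sub>v block_vec n 1 y z) $ i"
      using assms(1) hub by (simp add: K11_plus_mult_block_vec) (simp add: block_vec_def)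
  qed (simp add: block_vec_def carrier_matD[OF signless_laplacian_carrier_mat])
  moreover have "block_vec n 1 y z \<noteq> 0\<^sub>v n"
  proof
    assume "block_vec n 1 y z = 0\<^sub>v n"
    then have "block_vec n 1 y z $ 0 = 0"
      using assms(1) by simp
    then show False
      using assms(1) by (simp add: block_vec_def)
  qed
  ultimately show ?thesis
    unfolding eigenvalue_def eigenvector_def
    by (intro exI[of _ "block_vec n 1 y z"])
      (simp add: block_vec_carrier carrier_matD(1)[OF signless_laplacian_carrier_mat])
qed

lemma K11_plus_cubic_neg_at_bound: "K11_plus_cubic n (real n + 2 - 4 / (real n + 2)) < 0"
proof -
  define t where "t = real n + 2"
  have t: "2 \<le> t" and "real n = t - 2"
    by (simp_all add: t_def)
  have "K11_plus_cubic n (t - 4 / t) = (- 8 * t ^ 3 + 16 * t ^ 2 - 64 * t - 64) / t ^ 3"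
    using t unfolding K11_plus_cubic_def \<open>real n = t - 2\<close>
    by (simp add: field_simps power3_eq_cube power2_eq_square)
  moreover have "16 * t ^ 2 \<le> 8 * t ^ 3"
    using t by (simp add: power2_eq_square power3_eq_cube)
  ultimately show ?thesis
    using t by (simp add: t_def divide_neg_pos)
qed

lemma K11_plus_cubic_root_above_bound:
  "\<exists>\<mu>. K11_plus_cubic n \<mu> = 0 \<and> real n + 2 - 4 / (real n + 2) < \<mu>"
proof -
  define m where "m = real n + 2 - 4 / (real n + 2)"
  have "0 \<le> 4 / (real n + 2)"
    by simp
  have cubic_at_upper: "K11_plus_cubic n (real n + 10) = 8 * real n ^ 2 + 132 * real n + 496"
    by (simp add: K11_plus_cubic_def algebra_simps power2_eq_square)
  have "0 < K11_plus_cubic n (real n + 10)"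
    unfolding cubic_at_upper by (intro add_nonneg_pos) simp_all
  moreover have "m \<le> real n + 10"
    using \<open>0 \<le> 4 / (real n + 2)\<close> unfolding m_def by linarith
  moreover have "continuous_on {m .. real n + 10} (K11_plus_cubic n)"
    unfolding K11_plus_cubic_def by (intro continuous_intros)
  moreover have "K11_plus_cubic n m < 0"
    using K11_plus_cubic_neg_at_bound by (simp add: m_def)
  ultimately obtain \<mu> where "m \<le> \<mu>" and root: "K11_plus_cubic n \<mu> = 0"
    using IVT'[of "K11_plus_cubic n" m 0 "real n + 10"] by auto
  with \<open>K11_plus_cubic n m < 0\<close> have "m < \<mu>"
    by (cases "m = \<mu>") auto
  with root show ?thesis
    unfolding m_def by blast
qed

theorem lemma2p8:
  fixes n :: nat
  assumes "n \<ge> 6"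
  shows "q_index n K11_plus > real n + 2 - 4 / (real n + 2)"
proof -
  obtain \<mu> where root: "K11_plus_cubic n \<mu> = 0" and above: "real n + 2 - 4 / (real n + 2) < \<mu>"
    using K11_plus_cubic_root_above_bound by blast
  have "4 / (real n + 2) \<le> 1"
    using assms by simp
  then have "4 < \<mu>"
    using assms above by linarith
  then have "eigenvalue (signless_laplacian n K11_plus) \<mu>"
    using assms root by (intro eigenvalue_K11_plus_if_cubic_root) simp_all
  then have "\<mu> \<le> q_index n K11_plus"
    unfolding q_index_def by (rule eigenvalue_le_Max_eigenvalues[OF signless_laplacian_carrier_mat])
  with above show ?thesis
    by linarith
qed

end
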